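(* Let $L'$ and $L''$ be languages over $\Sigma$ that satisfy the partial order condition. Then $L=L'\cap L''$ also satisfies the partial order condition.
   Context: A DFA $(Q,\Sigma,\delta,q_0,F)$ (with $\delta$ extended to strings) satisfies the partial order condition if there do not exist two distinguishable states $q_1,q_2\in Q$ and strings $x,y\in\Sigma^+$ with $\delta(q_1,x)=\delta(q_2,x)=q_2$ and $\delta(q_2,y)=q_1$; here $q_1,q_2$ are distinguishable if there is $z\in\Sigma^*$ such that exactly one of $\delta(q_1,z),\delta(q_2,z)$ lies in $F$. A (regular) language satisfies the partial order condition if its minimal DFA does. *)

theory Defs
  imports Main
begin

text \<open>Complete DFAs over an alphabet \<Sigma>. States are natural numbers (every finite
  DFA is isomorphic to one with states in nat, so this loses no generality).\<close>

record 'a dfa =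
  states :: "nat set"
  init   :: nat
  final  :: "nat set"
  trans  :: "nat \<Rightarrow> 'a \<Rightarrow> nat"

definition dfa :: "'a set \<Rightarrow> 'a dfa \<Rightarrow> bool" where
  "dfa \<Sigma> M \<longleftrightarrow> finite \<Sigma> \<and> finite (states M) \<and> init M \<in> states M \<and>
     final M \<subseteq> states M \<and> (\<forall>q\<in>states M. \<forall>a\<in>\<Sigma>. trans M q a \<in> states M)"

definition delta :: "'a dfa \<Rightarrow> nat \<Rightarrow> 'a list \<Rightarrow> nat" where
  "delta M q w = foldl (trans M) q w"

definition lang :: "'a set \<Rightarrow> 'a dfa \<Rightarrow> 'a list set" where
  "lang \<Sigma> M = {w \<in> lists \<Sigma>. delta M (init M) w \<in> final M}"

definition regular :: "'a set \<Rightarrow> 'a list set \<Rightarrow> bool" where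
  "regular \<Sigma> L \<longleftrightarrow> (\<exists>M. dfa \<Sigma> M \<and> lang \<Sigma> M = L)"

definition minimal_dfa :: "'a set \<Rightarrow> 'a dfa \<Rightarrow> 'a list set \<Rightarrow> bool" where
  "minimal_dfa \<Sigma> M L \<longleftrightarrow> dfa \<Sigma> M \<and> lang \<Sigma> M = L \<and>
     (\<forall>M'. dfa \<Sigma> M' \<and> lang \<Sigma> M' = L \<longrightarrow> card (states M) \<le> card (states M'))"

definition distinguishable :: "'a set \<Rightarrow> 'a dfa \<Rightarrow> nat \<Rightarrow> nat \<Rightarrow> bool" where
  "distinguishable \<Sigma> M q1 q2 \<longleftrightarrow>
     (\<exists>z\<in>lists \<Sigma>. (delta M q1 z \<in> final M) \<noteq> (delta M q2 z \<in> final M))"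

definition dfa_POC :: "'a set \<Rightarrow> 'a dfa \<Rightarrow> bool" where
  "dfa_POC \<Sigma> M \<longleftrightarrow> \<not> (\<exists>q1\<in>states M. \<exists>q2\<in>states M. \<exists>x\<in>lists \<Sigma>. \<exists>y\<in>lists \<Sigma>.
      x \<noteq> [] \<and> y \<noteq> [] \<and> distinguishable \<Sigma> M q1 q2 \<and>
      delta M q1 x = q2 \<and> delta M q2 x = q2 \<and> delta M q2 y = q1)"

text \<open>A (regular) language satisfies the POC if its minimal DFA does
  (the minimal DFA is unique up to isomorphism; we require it of every minimal DFA).\<close>
definition lang_POC :: "'a set \<Rightarrow> 'a list set \<Rightarrow> bool" where
  "lang_POC \<Sigma> L \<longleftrightarrow> regular \<Sigma> L \<and> (\<forall>M. minimal_dfa \<Sigma> M L \<longrightarrow> dfa_POC \<Sigma> M)"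

end

theory Submission
  imports Defs "HOL-Library.FuncSet" "HOL-Library.Nat_Bijection"
begin

text \<open>Suppose a minimal DFA of \<open>L' \<inter> L''\<close> violates the condition: \<open>q\<^sub>1 \<cdot> x = q\<^sub>2 \<cdot> x = q\<^sub>2\<close>
  and \<open>q\<^sub>2 \<cdot> y = q\<^sub>1\<close> with \<open>q\<^sub>1, q\<^sub>2\<close> distinguishable, and let \<open>u\<close> lead to \<open>q\<^sub>1\<close>.
  Since transition monoids are finite, some power \<open>X\<close> of \<open>x\<close>, and then some power \<open>W = X Y\<close>
  of \<open>X y\<close>, act idempotently on minimal DFAs \<open>A\<close> and \<open>B\<close> of \<open>L'\<close> and \<open>L''\<close>; replacing
  \<open>x, y\<close> by \<open>X, Y\<close> keeps the violation. In \<open>A\<close>, with \<open>p\<close> the state reached by \<open>u\<close>, the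
  states \<open>r\<^sub>1 = p \<cdot> W\<close> and \<open>r\<^sub>2 = r\<^sub>1 \<cdot> X\<close> satisfy \<open>r\<^sub>2 \<cdot> X = r\<^sub>2\<close> and
  \<open>r\<^sub>2 \<cdot> Y = p \<cdot> W W = r\<^sub>1\<close>, so the condition for \<open>A\<close> makes them indistinguishable; likewise
  in \<open>B\<close>. Hence \<open>u W\<close> and \<open>u W X\<close> have the same residual in \<open>L'\<close>, in \<open>L''\<close>, and so in
  \<open>L' \<inter> L''\<close>, although they lead to \<open>q\<^sub>1\<close> and \<open>q\<^sub>2\<close>.\<close>

lemma funpow_periodic:
  fixes f :: "'a \<Rightarrow> 'a"
  assumes period: "(f ^^ (i + p)) s = (f ^^ i) s" and "i \<le> n"
  shows "(f ^^ (n + c * p)) s = (f ^^ n) s"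
proof -
  have funpow_add_apply: "(f ^^ (a + b)) t = (f ^^ a) ((f ^^ b) t)" for a b t
    by (simp add: funpow_add)
  have from_i: "(f ^^ (i + c * p)) s = (f ^^ i) s" for c
  proof (induction c)
    case (Suc c)
    have "(f ^^ (i + Suc c * p)) s = (f ^^ (c * p)) ((f ^^ (i + p)) s)"
      using funpow_add_apply[of "c * p" "i + p" s] by (simp add: algebra_simps)
    also have "\<dots> = (f ^^ (i + c * p)) s"
      using funpow_add_apply[of "c * p" i s] by (simp add: period add.commute)
    finally show ?case
      using Suc.IH by simp
  qed simp
  have "(f ^^ (n + c * p)) s = (f ^^ (n - i)) ((f ^^ (i + c * p)) s)"
    using funpow_add_apply[of "n - i" "i + c * p" s] \<open>i \<le> n\<close> by simp
  also have "\<dots> = (f ^^ n) s"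
    using funpow_add_apply[of "n - i" i s] \<open>i \<le> n\<close> by (simp add: from_i)
  finally show ?thesis .
qed

lemma funpow_idempotent_iterate:
  assumes "finite S" and "f ` S \<subseteq> S"
  shows "\<exists>k>0. \<forall>s\<in>S. (f ^^ k) ((f ^^ k) s) = (f ^^ k) s"
proof -
  define g where "g n = restrict (f ^^ n) S" for n
  have "(f ^^ n) ` S \<subseteq> S" for n
    using assms(2) by (induction n) auto
  then have "range g \<subseteq> S \<rightarrow>\<^sub>E S"
    by (auto simp: g_def image_subset_iff)
  moreover have "finite (S \<rightarrow>\<^sub>E S)"
    using assms(1) by (simp add: finite_PiE)
  ultimately have "finite (range g)"
    by (rule finite_subset)
  then have "\<not> inj g"
    by (metis finite_imageD infinite_UNIV_nat)
  then obtain i j where "i \<noteq> j" "g i = g j"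
    unfolding inj_def by blast
  then obtain i j where "i < j" "g i = g j"
    by (metis linorder_neqE_nat)
  define p where "p = j - i"
  have "0 < p"
    using \<open>i < j\<close> by (simp add: p_def)
  have period: "(f ^^ (i + p)) s = (f ^^ i) s" if "s \<in> S" for s
    using \<open>g i = g j\<close> \<open>i < j\<close> that by (simp add: g_def p_def restrict_def fun_eq_iff) (metis)
  define k where "k = (i + 1) * p"
  have "i + 1 \<le> k"
    unfolding k_def using \<open>0 < p\<close> by (metis Suc_leI mult_le_mono2 mult.right_neutral One_nat_def)
  have "(f ^^ k) ((f ^^ k) s) = (f ^^ k) s" if "s \<in> S" for s
  proof -
    have "(f ^^ (k + (i + 1) * p)) s = (f ^^ k) s"
      by (rule funpow_periodic[OF period[OF that]]) (use \<open>i + 1 \<le> k\<close> in simp)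
    then have "(f ^^ (k + k)) s = (f ^^ k) s"
      by (simp only: k_def)
    then show ?thesis
      by (simp add: funpow_add)
  qed
  moreover have "0 < k"
    using \<open>i + 1 \<le> k\<close> by simp
  ultimately show ?thesis
    by blast
qed

lemma delta_Nil [simp]: "delta M q [] = q"
  by (simp add: delta_def)

lemma delta_append [simp]: "delta M q (v @ w) = delta M (delta M q v) w"
  by (simp add: delta_def)

lemma delta_Cons: "delta M q (a # w) = delta M (trans M q a) w"
  by (simp add: delta_def)

lemma delta_in_states:
  assumes "dfa \<Sigma> M" "q \<in> states M" "w \<in> lists \<Sigma>"
  shows "delta M q w \<in> states M"
  using assms(3,2)
  by (induction w arbitrary: q) (use assms(1) in \<open>auto simp: delta_Cons dfa_def\<close>)

definition reachable_states :: "'a set \<Rightarrow> 'a dfa \<Rightarrow> nat set" where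
  "reachable_states \<Sigma> M = delta M (init M) ` lists \<Sigma>"

definition reachable_part :: "'a set \<Rightarrow> 'a dfa \<Rightarrow> 'a dfa" where
  "reachable_part \<Sigma> M =
     M\<lparr>states := reachable_states \<Sigma> M, final := final M \<inter> reachable_states \<Sigma> M\<rparr>"

lemma delta_reachable_part [simp]: "delta (reachable_part \<Sigma> M) = delta M"
  by (simp add: reachable_part_def delta_def fun_eq_iff)

lemma reachable_states_subset:
  assumes "dfa \<Sigma> M"
  shows "reachable_states \<Sigma> M \<subseteq> states M"
proof -
  have "init M \<in> states M"
    using assms by (simp add: dfa_def)
  then show ?thesis
    using delta_in_states[OF assms] by (auto simp: reachable_states_def)
qed

lemma dfa_reachable_part:
  assumes "dfa \<Sigma> M"
  shows "dfa \<Sigma> (reachable_part \<Sigma> M)"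
proof -
  let ?R = "reachable_states \<Sigma> M"
  have "trans M q a \<in> ?R" if "q \<in> ?R" "a \<in> \<Sigma>" for q a
  proof -
    obtain u where "u \<in> lists \<Sigma>" "q = delta M (init M) u"
      using \<open>q \<in> ?R\<close> by (auto simp: reachable_states_def)
    then have "trans M q a = delta M (init M) (u @ [a])" "u @ [a] \<in> lists \<Sigma>"
      using \<open>a \<in> \<Sigma>\<close> by (simp_all add: delta_def)
    then show ?thesis
      unfolding reachable_states_def by (rule image_eqI)
  qed
  moreover have "init M \<in> ?R"
    unfolding reachable_states_def by (rule image_eqI[of _ _ "[]"]) simp_all
  moreover have "finite ?R"
    using reachable_states_subset[OF assms] assms finite_subset by (auto simp: dfa_def)
  ultimately show ?thesis
    using assms by (simp add: dfa_def reachable_part_def)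
qed

lemma lang_reachable_part: "lang \<Sigma> (reachable_part \<Sigma> M) = lang \<Sigma> M"
proof -
  have "init (reachable_part \<Sigma> M) = init M"
    "final (reachable_part \<Sigma> M) = final M \<inter> reachable_states \<Sigma> M"
    by (simp_all add: reachable_part_def)
  then show ?thesis
    unfolding lang_def delta_reachable_part reachable_states_def by auto
qed

lemma minimal_dfa_states_reachable:
  assumes "minimal_dfa \<Sigma> M L"
  shows "states M \<subseteq> reachable_states \<Sigma> M"
proof -
  have "dfa \<Sigma> M" "lang \<Sigma> M = L"
    using assms by (simp_all add: minimal_dfa_def)
  then have "dfa \<Sigma> (reachable_part \<Sigma> M)" "lang \<Sigma> (reachable_part \<Sigma> M) = L"
    by (simp_all add: dfa_reachable_part lang_reachable_part)
  then have "card (states M) \<le> card (reachable_states \<Sigma> M)"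
    using assms unfolding minimal_dfa_def by (auto simp: reachable_part_def)
  moreover have "finite (states M)"
    using \<open>dfa \<Sigma> M\<close> by (simp add: dfa_def)
  ultimately have "reachable_states \<Sigma> M = states M"
    using card_seteq reachable_states_subset[OF \<open>dfa \<Sigma> M\<close>] by blast
  then show ?thesis
    by simp
qed

lemma ex_minimal_dfa:
  assumes "regular \<Sigma> L"
  shows "\<exists>M. minimal_dfa \<Sigma> M L"
proof -
  obtain M0 where "dfa \<Sigma> M0 \<and> lang \<Sigma> M0 = L"
    using assms by (auto simp: regular_def)
  then show ?thesis
    using ex_has_least_nat[of "\<lambda>M. dfa \<Sigma> M \<and> lang \<Sigma> M = L" M0 "\<lambda>M. card (states M)"]
    by (auto simp: minimal_dfa_def)
qed

text \<open>States are natural numbers, so pairs of states are coded by \<^const>\<open>prod_encode\<close>.\<close>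

definition product_dfa :: "'a dfa \<Rightarrow> 'a dfa \<Rightarrow> 'a dfa" where
  "product_dfa A B =
     \<lparr>states = prod_encode ` (states A \<times> states B),
      init = prod_encode (init A, init B),
      final = prod_encode ` (final A \<times> final B),
      trans = (\<lambda>n a. case prod_decode n of (p, q) \<Rightarrow> prod_encode (trans A p a, trans B q a))\<rparr>"

lemma delta_product_dfa:
  "delta (product_dfa A B) (prod_encode (p, q)) w = prod_encode (delta A p w, delta B q w)"
  by (induction w arbitrary: p q) (simp_all add: delta_Cons product_dfa_def)

lemma dfa_product_dfa: "dfa \<Sigma> A \<Longrightarrow> dfa \<Sigma> B \<Longrightarrow> dfa \<Sigma> (product_dfa A B)"
  by (auto simp: dfa_def product_dfa_def)

lemma lang_product_dfa: "lang \<Sigma> (product_dfa A B) = lang \<Sigma> A \<inter> lang \<Sigma> B"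
proof -
  have "init (product_dfa A B) = prod_encode (init A, init B)"
    "final (product_dfa A B) = prod_encode ` (final A \<times> final B)"
    by (simp_all add: product_dfa_def)
  then show ?thesis
    by (auto simp: lang_def delta_product_dfa inj_image_mem_iff[OF inj_prod_encode])
qed

lemma regular_Int: "regular \<Sigma> L \<Longrightarrow> regular \<Sigma> L' \<Longrightarrow> regular \<Sigma> (L \<inter> L')"
  unfolding regular_def by (metis dfa_product_dfa lang_product_dfa)

definition word_power :: "nat \<Rightarrow> 'a list \<Rightarrow> 'a list" where
  "word_power n w = concat (replicate n w)"

lemma word_power_0 [simp]: "word_power 0 w = []"
  by (simp add: word_power_def)

lemma word_power_Suc: "word_power (Suc n) w = w @ word_power n w"
  by (simp add: word_power_def)

lemma word_power_in_lists: "w \<in> lists \<Sigma> \<Longrightarrow> word_power n w \<in> lists \<Sigma>"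
  by (induction n) (auto simp: word_power_Suc)

lemma word_power_eq_Nil_iff: "word_power n w = [] \<longleftrightarrow> n = 0 \<or> w = []"
  by (cases n) (auto simp: word_power_def)

lemma word_power_mult: "word_power (m * n) w = word_power m (word_power n w)"
  by (induction m) (simp_all add: word_power_def replicate_add)

lemma delta_word_power: "delta M p (word_power n w) = ((\<lambda>q. delta M q w) ^^ n) p"
  by (induction n arbitrary: p) (simp_all add: word_power_Suc funpow_swap1[of "\<lambda>q. delta M q w"])

lemma delta_word_power_fixpoint: "delta M q w = q \<Longrightarrow> delta M q (word_power n w) = q"
  by (induction n) (simp_all add: word_power_Suc)

definition idempotent_word :: "'a dfa \<Rightarrow> 'a list \<Rightarrow> bool" where
  "idempotent_word M w \<longleftrightarrow> (\<forall>p\<in>states M. delta M (delta M p w) w = delta M p w)"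

lemma idempotent_word_power:
  assumes "idempotent_word M w" and "0 < n"
  shows "idempotent_word M (word_power n w)"
proof -
  have "delta M p (word_power n w) = delta M p w" if "p \<in> states M" for p
  proof -
    obtain m where "n = Suc m" using \<open>0 < n\<close> gr0_implies_Suc by blast
    then show ?thesis
      using assms(1) that by (simp add: word_power_Suc idempotent_word_def delta_word_power_fixpoint)
  qed
  then show ?thesis
    using assms(1) by (simp add: idempotent_word_def delta_word_power_fixpoint)
qed

lemma ex_idempotent_word_power:
  assumes "dfa \<Sigma> M" and "w \<in> lists \<Sigma>"
  shows "\<exists>k>0. idempotent_word M (word_power k w)"
proof -
  have "finite (states M)" "(\<lambda>q. delta M q w) ` states M \<subseteq> states M"
    using assms delta_in_states by (auto simp: dfa_def)
  then show ?thesis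
    unfolding idempotent_word_def delta_word_power by (rule funpow_idempotent_iterate)
qed

lemma ex_common_idempotent_word_power:
  assumes "dfa \<Sigma> A" "dfa \<Sigma> B" and "w \<in> lists \<Sigma>"
  shows "\<exists>k>0. idempotent_word A (word_power k w) \<and> idempotent_word B (word_power k w)"
proof -
  obtain a b where "0 < a" "idempotent_word A (word_power a w)"
    and "0 < b" "idempotent_word B (word_power b w)"
    using ex_idempotent_word_power assms by metis
  then have "idempotent_word A (word_power (b * a) w)" "idempotent_word B (word_power (a * b) w)"
    by (simp_all add: word_power_mult idempotent_word_power)
  with \<open>0 < a\<close> \<open>0 < b\<close> show ?thesis
    by (metis mult.commute nat_0_less_mult_iff)
qed

lemma distinguishable_reached_iff:
  assumes "u \<in> lists \<Sigma>" "v \<in> lists \<Sigma>"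
  shows "distinguishable \<Sigma> M (delta M (init M) u) (delta M (init M) v) \<longleftrightarrow>
    (\<exists>z\<in>lists \<Sigma>. (u @ z \<in> lang \<Sigma> M) \<noteq> (v @ z \<in> lang \<Sigma> M))"
  using assms by (auto simp: distinguishable_def lang_def)

lemma dfa_POC_idempotent_indistinguishable:
  assumes M: "dfa \<Sigma> M" "dfa_POC \<Sigma> M" and "p \<in> states M"
    and words: "x \<in> lists \<Sigma>" "y \<in> lists \<Sigma>" "x \<noteq> []" "y \<noteq> []"
    and idem: "idempotent_word M x" "idempotent_word M (x @ y)"
  shows "\<not> distinguishable \<Sigma> M (delta M p (x @ y)) (delta M p (x @ y @ x))"
proof -
  define r1 where "r1 = delta M p (x @ y)"
  define r2 where "r2 = delta M r1 x"
  have "x @ y \<in> lists \<Sigma>"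
    using words by simp
  then have "r1 \<in> states M" "r2 \<in> states M"
    using delta_in_states M(1) \<open>p \<in> states M\<close> words(1) unfolding r1_def r2_def by blast+
  moreover have "delta M r2 x = r2"
    using idem(1) \<open>r1 \<in> states M\<close> by (simp add: r2_def idempotent_word_def)
  moreover have "delta M r2 y = r1"
    using idem(2) \<open>p \<in> states M\<close> by (simp add: r1_def r2_def idempotent_word_def)
  ultimately have "\<not> distinguishable \<Sigma> M r1 r2"
    using M(2) words unfolding dfa_POC_def r2_def by blast
  then show ?thesis by (simp add: r1_def r2_def)
qed

lemma dfa_POC_lang_cancel:
  assumes "dfa \<Sigma> M" "dfa_POC \<Sigma> M"
    and words: "u \<in> lists \<Sigma>" "x \<in> lists \<Sigma>" "y \<in> lists \<Sigma>" "z \<in> lists \<Sigma>" "x \<noteq> []" "y \<noteq> []"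
    and idem: "idempotent_word M x" "idempotent_word M (x @ y)"
  shows "u @ x @ y @ z \<in> lang \<Sigma> M \<longleftrightarrow> u @ x @ y @ x @ z \<in> lang \<Sigma> M"
proof -
  have "delta M (init M) u \<in> states M"
    using assms(1) delta_in_states words(1) by (auto simp: dfa_def)
  from dfa_POC_idempotent_indistinguishable[OF assms(1,2) this words(2,3,5,6) idem]
  have "\<not> distinguishable \<Sigma> M (delta M (init M) (u @ x @ y)) (delta M (init M) (u @ x @ y @ x))"
    by simp
  moreover have "u @ x @ y \<in> lists \<Sigma>" "u @ x @ y @ x \<in> lists \<Sigma>"
    using words by simp_all
  ultimately show ?thesis
    using distinguishable_reached_iff[of "u @ x @ y" \<Sigma> "u @ x @ y @ x" M] words(4)
    by (metis append_assoc)
qed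

lemma idempotent_loop_words:
  assumes "dfa \<Sigma> A" "dfa \<Sigma> B"
    and words: "x \<in> lists \<Sigma>" "y \<in> lists \<Sigma>" "x \<noteq> []" "y \<noteq> []"
    and loop: "delta M q1 x = q2" "delta M q2 x = q2" "delta M q2 y = q1"
  obtains X Y where "X \<in> lists \<Sigma>" "Y \<in> lists \<Sigma>" "X \<noteq> []" "Y \<noteq> []"
    and "delta M q1 X = q2" "delta M q1 (X @ Y) = q1"
    and "idempotent_word A X" "idempotent_word B X"
    and "idempotent_word A (X @ Y)" "idempotent_word B (X @ Y)"
proof -
  obtain k where "0 < k" and idem_X: "idempotent_word A (word_power k x)" "idempotent_word B (word_power k x)"
    using ex_common_idempotent_word_power assms(1,2) words(1) by blast
  define X where "X = word_power k x"
  have X: "X \<in> lists \<Sigma>" "X \<noteq> []"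
    using \<open>0 < k\<close> words by (simp_all add: X_def word_power_in_lists word_power_eq_Nil_iff)
  have "delta M q1 X = q2"
    using \<open>0 < k\<close> loop by (cases k) (simp_all add: X_def word_power_Suc delta_word_power_fixpoint)
  obtain m where "0 < m"
    and idem_W: "idempotent_word A (word_power m (X @ y))" "idempotent_word B (word_power m (X @ y))"
    using ex_common_idempotent_word_power assms(1,2) X(1) words(2) by (metis append_in_lists_conv)
  define Y where "Y = y @ word_power (m - 1) (X @ y)"
  have W: "X @ Y = word_power m (X @ y)"
    using \<open>0 < m\<close> by (cases m) (simp_all add: Y_def word_power_Suc)
  have "Y \<in> lists \<Sigma>" "Y \<noteq> []"
    using X words by (simp_all add: Y_def word_power_in_lists)
  moreover have "delta M q1 (X @ Y) = q1"
    unfolding W using \<open>delta M q1 X = q2\<close> loop(3) by (simp add: delta_word_power_fixpoint)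
  ultimately show ?thesis
    using that X \<open>delta M q1 X = q2\<close> idem_X[folded X_def] idem_W[folded W] by blast
qed

lemma dfa_POC_Int:
  assumes A: "dfa \<Sigma> A" "dfa_POC \<Sigma> A" and B: "dfa \<Sigma> B" "dfa_POC \<Sigma> B"
    and M: "states M \<subseteq> reachable_states \<Sigma> M" "lang \<Sigma> M = lang \<Sigma> A \<inter> lang \<Sigma> B"
  shows "dfa_POC \<Sigma> M"
proof (rule ccontr)
  assume "\<not> dfa_POC \<Sigma> M"
  then obtain q1 q2 x y where "q1 \<in> states M"
    and words: "x \<in> lists \<Sigma>" "y \<in> lists \<Sigma>" "x \<noteq> []" "y \<noteq> []"
    and dist: "distinguishable \<Sigma> M q1 q2"
    and loop: "delta M q1 x = q2" "delta M q2 x = q2" "delta M q2 y = q1"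
    unfolding dfa_POC_def by auto
  obtain u where u: "u \<in> lists \<Sigma>" "delta M (init M) u = q1"
    using M(1) \<open>q1 \<in> states M\<close> by (auto simp: reachable_states_def)
  obtain X Y where words': "X \<in> lists \<Sigma>" "Y \<in> lists \<Sigma>" "X \<noteq> []" "Y \<noteq> []"
    and "delta M q1 X = q2" "delta M q1 (X @ Y) = q1"
    and idem: "idempotent_word A X" "idempotent_word B X"
      "idempotent_word A (X @ Y)" "idempotent_word B (X @ Y)"
    by (rule idempotent_loop_words[OF A(1) B(1) words loop])
  then have reach: "delta M (init M) (u @ X @ Y) = q1" "delta M (init M) (u @ X @ Y @ X) = q2"
    using u(2) by simp_all
  obtain z where "z \<in> lists \<Sigma>" and "(u @ X @ Y @ z \<in> lang \<Sigma> M) \<noteq> (u @ X @ Y @ X @ z \<in> lang \<Sigma> M)"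
    using dist distinguishable_reached_iff[of "u @ X @ Y" \<Sigma> "u @ X @ Y @ X" M] u(1) words'(1,2)
    unfolding reach by auto
  moreover have "u @ X @ Y @ z \<in> lang \<Sigma> A \<longleftrightarrow> u @ X @ Y @ X @ z \<in> lang \<Sigma> A"
    using dfa_POC_lang_cancel[OF A u(1) words'(1,2) \<open>z \<in> lists \<Sigma>\<close> words'(3,4) idem(1,3)] .
  moreover have "u @ X @ Y @ z \<in> lang \<Sigma> B \<longleftrightarrow> u @ X @ Y @ X @ z \<in> lang \<Sigma> B"
    using dfa_POC_lang_cancel[OF B u(1) words'(1,2) \<open>z \<in> lists \<Sigma>\<close> words'(3,4) idem(2,4)] .
  ultimately show False
    using M(2) by auto
qed

theorem lemma4p5:
  fixes \<Sigma> :: "'a set" and L' L'' :: "'a list set"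
  assumes "lang_POC \<Sigma> L'" and "lang_POC \<Sigma> L''"
  shows "lang_POC \<Sigma> (L' \<inter> L'')"
proof -
  have "regular \<Sigma> L'" "regular \<Sigma> L''"
    using assms by (simp_all add: lang_POC_def)
  then obtain A B where A: "minimal_dfa \<Sigma> A L'" and B: "minimal_dfa \<Sigma> B L''"
    using ex_minimal_dfa by blast
  have "dfa_POC \<Sigma> M" if M: "minimal_dfa \<Sigma> M (L' \<inter> L'')" for M
  proof (rule dfa_POC_Int)
    show "dfa \<Sigma> A" "dfa_POC \<Sigma> A" "dfa \<Sigma> B" "dfa_POC \<Sigma> B"
      using A B assms by (simp_all add: lang_POC_def minimal_dfa_def)
    show "states M \<subseteq> reachable_states \<Sigma> M"
      using M by (rule minimal_dfa_states_reachable)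
    show "lang \<Sigma> M = lang \<Sigma> A \<inter> lang \<Sigma> B"
      using A B M by (simp add: minimal_dfa_def)
  qed
  with \<open>regular \<Sigma> L'\<close> \<open>regular \<Sigma> L''\<close> show ?thesis
    by (simp add: lang_POC_def regular_Int)
qed

end
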